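(* Let $F$ be a CNF formula and let $\pi$ be a derivation from $F$. Then $F \vDash \mathrm{ctx}(\pi).\mathrm{acc}(F,\pi)$, where for a program $\varepsilon$ and a CNF formula $G$ we write $\varepsilon.G=\{\varepsilon.C : C\in G\}$ and $F$ is identified with the dynamic formula $\{[\,].C : C\in F\}$ ($[\,]$ the empty program).
   Context: Variables, assignments, literals ($x,\neg x,\top,\bot$ with complements $\overline{x}=\neg x$, $\overline{\neg x}=x$, $\overline\top=\bot$, $\overline\bot=\top$), substitutions (maps $\sigma$ on literals with $\sigma(\top)=\top$, $\sigma(\overline l)=\overline{\sigma(l)}$; finite if $\sigma(x)=x$ for all but finitely many variables), and $I\circ\sigma$ (the assignment with $(I\circ\sigma)(x)=1$ iff $I\vDash\sigma(x)$) are as usual. A clause $l_1\vee\dots\vee l_n$ is satisfied iff some $l_i$ is; a cube $l_1\wedge\dots\wedge l_n$ iff all are. Negations: $\overline{l_1\vee\dots\vee l_n}=\overline{l_1}\wedge\dots\wedge\overline{l_n}$ and $\overline{l_1\wedge\dots\wedge l_n}=\overline{l_1}\vee\dots\vee\overline{l_n}$; reducts $C[\sigma]$ apply $\sigma$ to each literal, and $F[\sigma]=\{C[\sigma]:C\in F\}$. A CNF formula is a finite set of clauses and cubes; a literal $l$ as a constraint is the unit clause $l$. Conflict detection $\vdash_\bot F$ is unit propagation: let $U(F)$ be the least set of literals containing $\top$, all literals of cubes in $F$, and such that for every clause $l_1\vee\dots\vee l_n\in F$ and $i$, if $\overline{l_j}\in U(F)$ for all $j\ne i$ then $l_i\in U(F)$;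 then $\vdash_\bot F$ iff $U(F)$ contains $\bot$, or contains $x$ and $\neg x$ for some variable $x$, or some clause of $F$ has all complements of its literals in $U(F)$. A clause $C$ is RUP over $F$ if $\vdash_\bot F\cup\{\overline C\}$; SR over $F$ upon $\sigma$ if $\vdash_\bot\{\overline{C[\sigma]}\}$ and $\vdash_\bot F\cup\{\overline C,\overline{D[\sigma]}\}$ for all $D\in F$; WSR over $F$ upon $\sigma$ modulo a CNF formula $G$ if $\vdash_\bot F\cup\{\overline C,\overline{D[\sigma]}\}$ for all $D\in(F\setminus G)\cup\{C\}$. Instructions are $\mathrm{del}(C)$, $\mathrm{rup}(C)$, $\mathrm{sr}(C,\sigma)$, $\mathrm{wsr}(C,\sigma,G)$ ($C$ clause, $\sigma$ finite substitution, $G$ CNF formula). The accumulated formula: $\mathrm{acc}(F,[\,])=F$, $\mathrm{acc}(F,\pi\,\mathrm{del}(C))=\mathrm{acc}(F,\pi)\setminus\{C\}$, $\mathrm{acc}(F,\pi\,\mathrm{rup}(C))=\mathrm{acc}(F,\pi\,\mathrm{sr}(C,\sigma))=\mathrm{acc}(F,\pi)\cup\{C\}$, $\mathrm{acc}(F,\pi\,\mathrm{wsr}(C,\sigma,G))=(\mathrm{acc}(F,\pi)\setminus G)\cup\{C\}$. Derivations from $F$: the empty list is one; if $\pi$ is one then so is $\pi\,\mathrm{del}(C)$, and so are $\pi\,\mathrm{rup}(C)$, $\pi\,\mathrm{sr}(C,\sigma)$, $\pi\,\mathrm{wsr}(C,\sigma,G)$ provided $C$ is respectively RUP over, SR over upon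 $\sigma$, or WSR over upon $\sigma$ modulo $G$, the formula $\mathrm{acc}(F,\pi)$. Programs: program items are $\langle\sigma\rangle$ ($I\otimes J\vDash\langle\sigma\rangle$ iff $J=I\circ\sigma$), tests $T?$ ($I\otimes J\vDash T?$ iff $I\vDash T$, $J=I$), choices $\varepsilon_1\sqcup\varepsilon_2$ (either), and branches $\mathrm{if}\ T\ \mathrm{then}\ \varepsilon_1\parallel\varepsilon_0$ (behave as $\varepsilon_1$ if $I\vDash T$, as $\varepsilon_0$ otherwise); a program is a list of items with sequential-composition semantics (the empty program $[\,]$ relates $I$ to $I$ only). We write $\mathrm{if}\ T\ \mathrm{then}\ \varepsilon$ for $\mathrm{if}\ T\ \mathrm{then}\ \varepsilon\parallel[\,]$. A dynamic constraint $\varepsilon.C$ is satisfied by $I$ iff $J\vDash C$ for all $J$ with $I\otimes J\vDash\varepsilon$; dynamic formulas are finite sets of these, interpreted conjunctively. The context of an instruction list: $\mathrm{ctx}([\,])=[\,]$, $\mathrm{ctx}(\pi\,\mathrm{del}(C))=\mathrm{ctx}(\pi\,\mathrm{rup}(C))=\mathrm{ctx}(\pi)$, $\mathrm{ctx}(\pi\,\mathrm{sr}(C,\sigma))=\mathrm{ctx}(\pi\,\mathrm{wsr}(C,\sigma,G))=\mathrm{ctx}(\pi)\,(\mathrm{if}\ \overline C\ \mathrm{then}\ \langle\sigma\rangle)$. *)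

theory Defs
  imports Main
begin

datatype 'v lit = Pos 'v | Neg 'v | Top | Bot

fun compl :: "'v lit \<Rightarrow> 'v lit" where
  "compl (Pos x) = Neg x"
| "compl (Neg x) = Pos x"
| "compl Top = Bot"
| "compl Bot = Top"

type_synonym 'v assignment = "'v \<Rightarrow> bool"

fun lit_sat :: "'v assignment \<Rightarrow> 'v lit \<Rightarrow> bool" where
  "lit_sat I (Pos x) = I x"
| "lit_sat I (Neg x) = (\<not> I x)"
| "lit_sat I Top = True"
| "lit_sat I Bot = False"

type_synonym 'v subst = "'v \<Rightarrow> 'v lit"

fun subst_lit :: "'v subst \<Rightarrow> 'v lit \<Rightarrow> 'v lit" where
  "subst_lit \<sigma> (Pos x) = \<sigma> x"
| "subst_lit \<sigma> (Neg x) = compl (\<sigma> x)"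
| "subst_lit \<sigma> Top = Top"
| "subst_lit \<sigma> Bot = Bot"

definition finite_subst :: "'v subst \<Rightarrow> bool" where
  "finite_subst \<sigma> \<longleftrightarrow> finite {x. \<sigma> x \<noteq> Pos x}"

definition compose_asg :: "'v assignment \<Rightarrow> 'v subst \<Rightarrow> 'v assignment" where
  "compose_asg I \<sigma> = (\<lambda>x. lit_sat I (\<sigma> x))"

datatype 'v constr = Clause "'v lit list" | Cube "'v lit list"

fun sat :: "'v assignment \<Rightarrow> 'v constr \<Rightarrow> bool" where
  "sat I (Clause ls) = (\<exists>l\<in>set ls. lit_sat I l)"
| "sat I (Cube ls) = (\<forall>l\<in>set ls. lit_sat I l)"

fun neg :: "'v constr \<Rightarrow> 'v constr" where
  "neg (Clause ls) = Cube (map compl ls)"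
| "neg (Cube ls) = Clause (map compl ls)"

fun reduct :: "'v constr \<Rightarrow> 'v subst \<Rightarrow> 'v constr" where
  "reduct (Clause ls) \<sigma> = Clause (map (subst_lit \<sigma>) ls)"
| "reduct (Cube ls) \<sigma> = Cube (map (subst_lit \<sigma>) ls)"

text \<open>A CNF formula is a finite set of clauses and cubes (finiteness imposed separately).\<close>
type_synonym 'v cnf = "'v constr set"

inductive_set U :: "'v cnf \<Rightarrow> 'v lit set" for F :: "'v cnf" where
  U_top: "Top \<in> U F"
| U_cube: "Cube ls \<in> F \<Longrightarrow> l \<in> set ls \<Longrightarrow> l \<in> U F"
| U_clause: "Clause ls \<in> F \<Longrightarrow> i < length ls \<Longrightarrow>
     (\<forall>j<length ls. j \<noteq> i \<longrightarrow> compl (ls ! j) \<in> U F) \<Longrightarrow> ls ! i \<in> U F"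

definition conflict :: "'v cnf \<Rightarrow> bool" where
  "conflict F \<longleftrightarrow> Bot \<in> U F \<or> (\<exists>x. Pos x \<in> U F \<and> Neg x \<in> U F)
     \<or> (\<exists>ls. Clause ls \<in> F \<and> (\<forall>l\<in>set ls. compl l \<in> U F))"

definition is_rup :: "'v cnf \<Rightarrow> 'v lit list \<Rightarrow> bool" where
  "is_rup F C \<longleftrightarrow> conflict (F \<union> {neg (Clause C)})"

definition is_sr :: "'v cnf \<Rightarrow> 'v lit list \<Rightarrow> 'v subst \<Rightarrow> bool" where
  "is_sr F C \<sigma> \<longleftrightarrow> conflict {neg (reduct (Clause C) \<sigma>)}
     \<and> (\<forall>D\<in>F. conflict (F \<union> {neg (Clause C), neg (reduct D \<sigma>)}))"

definition is_wsr :: "'v cnf \<Rightarrow> 'v lit list \<Rightarrow> 'v subst \<Rightarrow> 'v cnf \<Rightarrow> bool" where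
  "is_wsr F C \<sigma> G \<longleftrightarrow>
     (\<forall>D\<in>(F - G) \<union> {Clause C}. conflict (F \<union> {neg (Clause C), neg (reduct D \<sigma>)}))"

datatype 'v instr =
    Del "'v lit list"
  | Rup "'v lit list"
  | Sr "'v lit list" "'v subst"
  | Wsr "'v lit list" "'v subst" "'v cnf"

fun acc_step :: "'v instr \<Rightarrow> 'v cnf \<Rightarrow> 'v cnf" where
  "acc_step (Del C) F = F - {Clause C}"
| "acc_step (Rup C) F = F \<union> {Clause C}"
| "acc_step (Sr C \<sigma>) F = F \<union> {Clause C}"
| "acc_step (Wsr C \<sigma> G) F = (F - G) \<union> {Clause C}"

text \<open>Instruction lists are processed from left to right: acc F (pi @ [i]) = step i (acc F pi).\<close>
definition acc :: "'v cnf \<Rightarrow> 'v instr list \<Rightarrow> 'v cnf" where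
  "acc F \<pi> = fold acc_step \<pi> F"

inductive derivation :: "'v cnf \<Rightarrow> 'v instr list \<Rightarrow> bool" for F :: "'v cnf" where
  der_nil: "derivation F []"
| der_del: "derivation F \<pi> \<Longrightarrow> derivation F (\<pi> @ [Del C])"
| der_rup: "derivation F \<pi> \<Longrightarrow> is_rup (acc F \<pi>) C \<Longrightarrow> derivation F (\<pi> @ [Rup C])"
| der_sr: "derivation F \<pi> \<Longrightarrow> finite_subst \<sigma> \<Longrightarrow> is_sr (acc F \<pi>) C \<sigma>
     \<Longrightarrow> derivation F (\<pi> @ [Sr C \<sigma>])"
| der_wsr: "derivation F \<pi> \<Longrightarrow> finite_subst \<sigma> \<Longrightarrow> finite G \<Longrightarrow> is_wsr (acc F \<pi>) C \<sigma> G
     \<Longrightarrow> derivation F (\<pi> @ [Wsr C \<sigma> G])"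

datatype 'v item =
    SubstI "'v subst"
  | Test "'v constr"
  | Choice "'v item list" "'v item list"
  | Branch "'v constr" "'v item list" "'v item list"

type_synonym 'v program = "'v item list"

text \<open>item_rel it I J means I (x) J |= it; prog_rel is sequential composition (first item first).\<close>
inductive item_rel :: "'v item \<Rightarrow> 'v assignment \<Rightarrow> 'v assignment \<Rightarrow> bool"
  and prog_rel :: "'v program \<Rightarrow> 'v assignment \<Rightarrow> 'v assignment \<Rightarrow> bool" where
  rel_subst: "item_rel (SubstI \<sigma>) I (compose_asg I \<sigma>)"
| rel_test: "sat I T \<Longrightarrow> item_rel (Test T) I I"
| rel_choice1: "prog_rel e1 I J \<Longrightarrow> item_rel (Choice e1 e2) I J"
| rel_choice2: "prog_rel e2 I J \<Longrightarrow> item_rel (Choice e1 e2) I J"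
| rel_branch1: "sat I T \<Longrightarrow> prog_rel e1 I J \<Longrightarrow> item_rel (Branch T e1 e0) I J"
| rel_branch0: "\<not> sat I T \<Longrightarrow> prog_rel e0 I J \<Longrightarrow> item_rel (Branch T e1 e0) I J"
| rel_nil: "prog_rel [] I I"
| rel_cons: "item_rel it I K \<Longrightarrow> prog_rel p K J \<Longrightarrow> prog_rel (it # p) I J"

type_synonym 'v dyn_constr = "'v program \<times> 'v constr"
type_synonym 'v dyn_formula = "'v dyn_constr set"

definition dyn_sat :: "'v assignment \<Rightarrow> 'v dyn_constr \<Rightarrow> bool" where
  "dyn_sat I d \<longleftrightarrow> (\<forall>J. prog_rel (fst d) I J \<longrightarrow> sat J (snd d))"

definition dyn_models :: "'v assignment \<Rightarrow> 'v dyn_formula \<Rightarrow> bool" where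
  "dyn_models I D \<longleftrightarrow> (\<forall>d\<in>D. dyn_sat I d)"

definition dyn_entails :: "'v dyn_formula \<Rightarrow> 'v dyn_formula \<Rightarrow> bool" where
  "dyn_entails D1 D2 \<longleftrightarrow> (\<forall>I. dyn_models I D1 \<longrightarrow> dyn_models I D2)"

text \<open>eps.G = {eps.C : C in G}; a CNF F is identified with [].F.\<close>
definition dyn_of :: "'v program \<Rightarrow> 'v cnf \<Rightarrow> 'v dyn_formula" where
  "dyn_of \<epsilon> G = (\<lambda>C. (\<epsilon>, C)) ` G"

fun ctx_step :: "'v instr \<Rightarrow> 'v program \<Rightarrow> 'v program" where
  "ctx_step (Del C) p = p"
| "ctx_step (Rup C) p = p"
| "ctx_step (Sr C \<sigma>) p = p @ [Branch (neg (Clause C)) [SubstI \<sigma>] []]"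
| "ctx_step (Wsr C \<sigma> G) p = p @ [Branch (neg (Clause C)) [SubstI \<sigma>] []]"

definition ctx :: "'v instr list \<Rightarrow> 'v program" where
  "ctx \<pi> = fold ctx_step \<pi> []"

end

theory Submission
  imports Defs
begin

text \<open>Soundness is semantic, by induction on the derivation: every assignment that the
  context program reaches from a model of F satisfies the accumulated formula. An sr or wsr
  step for C appends the guarded substitution if not C then <sigma>. If the current
  assignment K satisfies C, the step changes nothing. Otherwise K satisfies the accumulated
  formula together with the negation of C, and since unit propagation is sound, each conflict
  required by the side condition forces D[sigma] under K, that is, D under K o sigma.\<close>

abbreviation models :: "'v assignment \<Rightarrow> 'v cnf \<Rightarrow> bool" where
  "models I G \<equiv> \<forall>C\<in>G. sat I C"

lemma lit_sat_compl [simp]: "lit_sat I (compl l) \<longleftrightarrow> \<not> lit_sat I l"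
  by (cases l) auto

lemma sat_neg [simp]: "sat I (neg C) \<longleftrightarrow> \<not> sat I C"
  by (cases C) auto

lemma lit_sat_subst_lit [simp]: "lit_sat I (subst_lit \<sigma> l) = lit_sat (compose_asg I \<sigma>) l"
  by (cases l) (auto simp: compose_asg_def)

lemma sat_reduct [simp]: "sat I (reduct C \<sigma>) = sat (compose_asg I \<sigma>) C"
  by (cases C) auto

lemma U_sound:
  assumes "l \<in> U G" and "models I G"
  shows "lit_sat I l"
  using assms(1)
proof (induction rule: U.induct)
  case U_top
  then show ?case by simp
next
  case (U_cube ls l)
  then show ?case using assms(2) by fastforce
next
  case (U_clause ls i)
  from U_clause.hyps(1) assms(2) obtain k where k: "k < length ls" "lit_sat I (ls ! k)"
    by (fastforce simp: in_set_conv_nth)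
  show ?case
  proof (cases "k = i")
    case False
    with U_clause.IH k show ?thesis by fastforce
  qed (use k in simp)
qed

lemma conflict_sound:
  assumes "conflict G"
  shows "\<not> models I G"
proof
  assume models: "models I G"
  have sound: "lit_sat I l" if "l \<in> U G" for l
    using U_sound[OF that models] .
  from assms consider "Bot \<in> U G" | x where "Pos x \<in> U G" "Neg x \<in> U G"
    | ls where "Clause ls \<in> G" "\<forall>l\<in>set ls. compl l \<in> U G"
    unfolding conflict_def by blast
  then show False
  proof cases
    case 1
    then show False using sound[of Bot] by simp
  next
    case (2 x)
    then show False using sound[of "Pos x"] sound[of "Neg x"] by simp
  next
    case (3 ls)
    then have "\<not> sat I (Clause ls)" using sound by fastforce
    with 3 models show False by blast
  qed
qed

lemma is_rup_sound: "is_rup F C \<Longrightarrow> models I F \<Longrightarrow> sat I (Clause C)"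
  unfolding is_rup_def using conflict_sound by fastforce

lemma conflict_sat_compose:
  assumes "conflict (F \<union> {neg (Clause C), neg (reduct D \<sigma>)})"
    and "models I F" and "\<not> sat I (Clause C)"
  shows "sat (compose_asg I \<sigma>) D"
  using conflict_sound[OF assms(1), of I] assms(2,3) by auto

lemma is_sr_sat_compose:
  assumes "is_sr F C \<sigma>" and "models I F" and "\<not> sat I (Clause C)"
  shows "models (compose_asg I \<sigma>) (F \<union> {Clause C})"
proof -
  have "sat (compose_asg I \<sigma>) (Clause C)"
    using assms(1) conflict_sound[of "{neg (reduct (Clause C) \<sigma>)}" I]
    unfolding is_sr_def by auto
  moreover have "models (compose_asg I \<sigma>) F"
    using assms conflict_sat_compose unfolding is_sr_def by blast
  ultimately show ?thesis by blast
qed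

lemma is_wsr_sat_compose:
  assumes "is_wsr F C \<sigma> G" and "models I F" and "\<not> sat I (Clause C)"
  shows "models (compose_asg I \<sigma>) ((F - G) \<union> {Clause C})"
  using assms conflict_sat_compose unfolding is_wsr_def by blast

lemma prog_rel_Nil_iff [simp]: "prog_rel [] I J \<longleftrightarrow> J = I"
  by (auto elim: prog_rel.cases intro: rel_nil)

lemma prog_rel_Cons_iff: "prog_rel (it # p) I J \<longleftrightarrow> (\<exists>K. item_rel it I K \<and> prog_rel p K J)"
  by (rule iffI, erule prog_rel.cases) (auto intro: rel_cons)

lemma prog_rel_append_iff:
  "prog_rel (p @ q) I J \<longleftrightarrow> (\<exists>K. prog_rel p I K \<and> prog_rel q K J)"
  by (induction p arbitrary: I) (auto simp: prog_rel_Cons_iff)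

lemma item_rel_SubstI_iff [simp]: "item_rel (SubstI \<sigma>) I J \<longleftrightarrow> J = compose_asg I \<sigma>"
  by (auto elim: item_rel.cases[of "SubstI _"] intro: rel_subst)

lemma item_rel_Branch_iff [simp]:
  "item_rel (Branch T p q) I J \<longleftrightarrow> (if sat I T then prog_rel p I J else prog_rel q I J)"
  by (auto elim: item_rel.cases[of "Branch _ _ _"] intro: rel_branch1 rel_branch0)

lemma prog_rel_guarded_subst:
  "prog_rel [Branch T [SubstI \<sigma>] []] I J \<longleftrightarrow> J = (if sat I T then compose_asg I \<sigma> else I)"
  by (simp add: prog_rel_Cons_iff)

lemma models_after_guarded_subst:
  assumes "prog_rel [Branch (neg (Clause C)) [SubstI \<sigma>] []] I J"
    and "models I F" and "H \<subseteq> F \<union> {Clause C}"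
    and "\<not> sat I (Clause C) \<Longrightarrow> models (compose_asg I \<sigma>) H"
  shows "models J H"
proof (cases "sat I (Clause C)")
  case True
  then have "J = I" using assms(1) by (simp add: prog_rel_guarded_subst del: neg.simps)
  with True assms(2,3) show ?thesis by blast
next
  case False
  then show ?thesis using assms(1,4) by (simp add: prog_rel_guarded_subst)
qed

lemma acc_snoc [simp]: "acc F (\<pi> @ [i]) = acc_step i (acc F \<pi>)"
  by (simp add: acc_def)

lemma ctx_snoc [simp]: "ctx (\<pi> @ [i]) = ctx_step i (ctx \<pi>)"
  by (simp add: ctx_def)

lemma derivation_sound:
  assumes "derivation F \<pi>" and "models I F" and "prog_rel (ctx \<pi>) I J"
  shows "models J (acc F \<pi>)"
  using assms
proof (induction arbitrary: J rule: derivation.induct)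
  case der_nil
  then show ?case by (simp add: acc_def ctx_def)
next
  case (der_del \<pi> C)
  then show ?case by auto
next
  case (der_rup \<pi> C)
  then have models: "models J (acc F \<pi>)" by simp
  with is_rup_sound[OF der_rup.hyps(2) models] show ?case by simp
next
  case (der_sr \<pi> \<sigma> C)
  from der_sr.prems(2) obtain K where "prog_rel (ctx \<pi>) I K"
      and step: "prog_rel [Branch (neg (Clause C)) [SubstI \<sigma>] []] K J"
    by (auto simp: prog_rel_append_iff)
  then have models: "models K (acc F \<pi>)" using der_sr.IH der_sr.prems(1) by blast
  have "models J (acc F \<pi> \<union> {Clause C})"
    by (rule models_after_guarded_subst[OF step models order.refl
          is_sr_sat_compose[OF der_sr.hyps(3) models]])
  then show ?case by (simp only: acc_snoc acc_step.simps)
next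
  case (der_wsr \<pi> \<sigma> G C)
  from der_wsr.prems(2) obtain K where "prog_rel (ctx \<pi>) I K"
      and step: "prog_rel [Branch (neg (Clause C)) [SubstI \<sigma>] []] K J"
    by (auto simp: prog_rel_append_iff)
  then have models: "models K (acc F \<pi>)" using der_wsr.IH der_wsr.prems(1) by blast
  have "models J ((acc F \<pi> - G) \<union> {Clause C})"
  proof (rule models_after_guarded_subst[OF step models])
    show "(acc F \<pi> - G) \<union> {Clause C} \<subseteq> acc F \<pi> \<union> {Clause C}" by blast
  qed (rule is_wsr_sat_compose[OF der_wsr.hyps(4) models])
  then show ?case by (simp only: acc_snoc acc_step.simps)
qed

lemma dyn_models_dyn_of:
  "dyn_models I (dyn_of p G) \<longleftrightarrow> (\<forall>J. prog_rel p I J \<longrightarrow> models J G)"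
  by (auto simp: dyn_models_def dyn_of_def dyn_sat_def)

theorem mainTheorem3:
  fixes F :: "'v cnf" and \<pi> :: "'v instr list"
  assumes "finite F"
    and "derivation F \<pi>"
  shows "dyn_entails (dyn_of [] F) (dyn_of (ctx \<pi>) (acc F \<pi>))"
  using derivation_sound[OF assms(2)]
  by (simp add: dyn_entails_def dyn_models_dyn_of)

end
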